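(* Let $C\subseteq 2^X$ be an ample class and let $C'\subseteq C$ be a subclass whose graph $G(C')$ is connected. Then $C'$ is convex in $C$ if and only if $C'$ is locally convex in $C$.
   Context: A cube of $2^X$ is $\{T\cup Z:Z\subseteq Y\}$ with $Y\subseteq X$, $T\subseteq X\setminus Y$ ($Y$ its support). $Y$ is shattered by $C$ if $\{c\cap Y:c\in C\}=2^Y$; $C$ is ample if every set shattered by $C$ is the support of a cube contained in $C$. $G(C)$ is the graph on $C$ joining $c,c'$ with $|c\Delta c'|=1$. For $c,c'\subseteq X$, $B(c,c')$ is the smallest cube of $2^X$ containing $c$ and $c'$ (the set of $t$ with $c\cap c'\subseteq t\subseteq c\cup c'$). For $C'\subseteq C$: $C'$ is convex in $C$ if $B(c,c')\cap C\subseteq C'$ for all $c,c'\in C'$; $C'$ is locally convex in $C$ if $B(c,c')\cap C\subseteq C'$ for all $c,c'\in C'$ with $|c\Delta c'|=2$. *)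

theory Defs
  imports Main
begin

definition cube :: "'a set \<Rightarrow> 'a set \<Rightarrow> 'a set set" where
  "cube T Y = {T \<union> Z | Z. Z \<subseteq> Y}"

definition shatters :: "'a set set \<Rightarrow> 'a set \<Rightarrow> bool" where
  "shatters C Y \<longleftrightarrow> {c \<inter> Y | c. c \<in> C} = Pow Y"

definition ample :: "'a set \<Rightarrow> 'a set set \<Rightarrow> bool" where
  "ample X C \<longleftrightarrow> C \<subseteq> Pow X \<and>
     (\<forall>Y. Y \<subseteq> X \<and> shatters C Y \<longrightarrow>
        (\<exists>T. T \<subseteq> X - Y \<and> cube T Y \<subseteq> C))"

definition adj :: "'a set set \<Rightarrow> 'a set \<Rightarrow> 'a set \<Rightarrow> bool" where
  "adj C c c' \<longleftrightarrow> c \<in> C \<and> c' \<in> C \<and> card (c - c' \<union> (c' - c)) = 1"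

definition graph_connected :: "'a set set \<Rightarrow> bool" where
  "graph_connected C \<longleftrightarrow> (\<forall>c\<in>C. \<forall>c'\<in>C. (adj C)\<^sup>*\<^sup>* c c')"

text \<open>Smallest cube of 2^X containing c and c'.\<close>
definition B :: "'a set \<Rightarrow> 'a set \<Rightarrow> 'a set set" where
  "B c c' = {t. c \<inter> c' \<subseteq> t \<and> t \<subseteq> c \<union> c'}"

definition convex_in :: "'a set set \<Rightarrow> 'a set set \<Rightarrow> bool" where
  "convex_in C' C \<longleftrightarrow> (\<forall>c\<in>C'. \<forall>c'\<in>C'. B c c' \<inter> C \<subseteq> C')"

definition locally_convex_in :: "'a set set \<Rightarrow> 'a set set \<Rightarrow> bool" where
  "locally_convex_in C' C \<longleftrightarrow>
     (\<forall>c\<in>C'. \<forall>c'\<in>C'. card (c - c' \<union> (c' - c)) = 2 \<longrightarrow> B c c' \<inter> C \<subseteq> C')"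

end

theory Submission
  imports Defs
begin

text \<open>For the converse we induct on C'. Given
  c, d \<in> C' and t \<in> B c d \<inter> C, the class C \<inter> B c t is again ample, hence connected, so
  there is a walk from c to t inside B c d. Each step flips a coordinate e on which C' is not
  constant, so it suffices that C' is closed under such flips within C. If s \<in> C' and
  flip e s \<in> C, let K be the component of s in the e-halfspace of C' containing s. It is a
  proper, connected, locally convex subclass, hence convex by induction, and connectivity of C'
  yields some a \<in> K with flip e a \<in> C'. The vertices p of C on the side of s with
  flip e p \<in> C form an ample class; a walk from s to a inside its intersection with B s a
  stays in K by convexity, and local convexity, applied to the 2-faces spanned by the walk and
  the e-flips, transports flip e a \<in> C' back to flip e s \<in> C'.\<close>

definition flip :: "'a \<Rightarrow> 'a set \<Rightarrow> 'a set" where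
  "flip e p = (if e \<in> p then p - {e} else insert e p)"

lemma mem_flip: "x \<in> flip e p \<longleftrightarrow> (x = e \<and> x \<notin> p) \<or> (x \<noteq> e \<and> x \<in> p)"
  by (auto simp: flip_def)

lemma sym_diff_eq_singleton_iff: "sym_diff p q = {e} \<longleftrightarrow> q = flip e p"
  by (auto simp: set_eq_iff mem_flip)

lemma adj_iff_flip: "adj A p q \<longleftrightarrow> p \<in> A \<and> q \<in> A \<and> (\<exists>e. q = flip e p)"
  unfolding adj_def One_nat_def card_1_singleton_iff sym_diff_eq_singleton_iff by blast

lemma symp_adj: "symp (adj A)"
  by (auto simp: symp_def adj_def Un_commute)

lemma rtranclp_adj_mono: "A \<subseteq> A' \<Longrightarrow> (adj A)\<^sup>*\<^sup>* \<le> (adj A')\<^sup>*\<^sup>*"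
  by (intro rtranclp_mono) (auto simp: adj_def)

lemma B_commute: "B c t = B t c"
  by (auto simp: B_def)

lemma B_subset_B: "u \<in> B c t \<Longrightarrow> B c u \<subseteq> B c t"
  by (auto simp: B_def)

lemma card_sym_diff_less_if_in_B:
  assumes "finite (sym_diff c t)" "u \<in> B c t" "u \<noteq> t"
  shows "card (sym_diff c u) < card (sym_diff c t)"
proof (rule psubset_card_mono[OF assms(1)])
  show "sym_diff c u \<subset> sym_diff c t"
    using assms(2,3) by (auto simp: B_def)
qed

lemma card_sym_diff_flip_flip:
  assumes "f \<noteq> e" shows "card (sym_diff p (flip e (flip f p))) = 2"
proof -
  have "sym_diff p (flip e (flip f p)) = {e, f}"
    using assms by (auto simp: mem_flip)
  then show ?thesis using assms by simp
qed

lemma flip_in_B_flip_flip: "f \<noteq> e \<Longrightarrow> flip e p \<in> B p (flip e (flip f p))"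
  by (auto simp: B_def mem_flip)

lemma flip_in_B_separates: "flip f y \<in> B c d \<Longrightarrow> \<exists>w\<in>{c, d}. (f \<in> w) \<noteq> (f \<in> y)"
  by (auto simp: B_def mem_flip)

lemma card_sym_diff_eq_1_if_in_B_card_2:
  assumes "card (sym_diff z z') = 2" "x \<in> B z z'" "x \<noteq> z" "x \<noteq> z'"
  shows "card (sym_diff z x) = 1"
proof -
  have fin: "finite (sym_diff z z')"
    using assms(1) by (metis card.infinite zero_neq_numeral)
  have "card (sym_diff z x) < 2"
    using card_sym_diff_less_if_in_B[OF fin assms(2,4)] assms(1) by simp
  moreover have "finite (sym_diff z x)"
    using assms(2) by (auto simp: B_def intro: finite_subset[OF _ fin])
  then have "card (sym_diff z x) \<noteq> 0"
    using assms(3) by auto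
  ultimately show ?thesis by linarith
qed

definition graph_component :: "'a set set \<Rightarrow> 'a set \<Rightarrow> 'a set set" where
  "graph_component A s = {z. (adj A)\<^sup>*\<^sup>* s z}"

lemma graph_component_closed:
  "z \<in> graph_component A s \<Longrightarrow> adj A z w \<Longrightarrow> w \<in> graph_component A s"
  by (auto simp: graph_component_def intro: rtranclp.rtrancl_into_rtrancl)

lemma graph_component_subset:
  assumes "s \<in> A" shows "graph_component A s \<subseteq> A"
proof
  fix z assume "z \<in> graph_component A s"
  then have "(adj A)\<^sup>*\<^sup>* s z" by (simp add: graph_component_def)
  then show "z \<in> A"
    using assms by (induction rule: rtranclp_induct) (auto simp: adj_def)
qed

lemma graph_connected_graph_component: "graph_connected (graph_component A s)"
proof -
  let ?K = "graph_component A s"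
  have path: "(adj ?K)\<^sup>*\<^sup>* s z" if "(adj A)\<^sup>*\<^sup>* s z" for z
    using that
  proof (induction rule: rtranclp_induct)
    case (step z w)
    then have "z \<in> ?K" "w \<in> ?K"
      by (auto simp: graph_component_def intro: rtranclp.rtrancl_into_rtrancl)
    with step have "adj ?K z w" by (simp add: adj_def)
    with step.IH show ?case by (rule rtranclp.rtrancl_into_rtrancl)
  qed simp
  show ?thesis
    unfolding graph_connected_def
  proof (intro ballI)
    fix z z' assume "z \<in> ?K" "z' \<in> ?K"
    then have "(adj ?K)\<^sup>*\<^sup>* z s" "(adj ?K)\<^sup>*\<^sup>* s z'"
      using path sympD[OF symp_rtranclp[OF symp_adj]] by (auto simp: graph_component_def)
    then show "(adj ?K)\<^sup>*\<^sup>* z z'" by (rule rtranclp_trans)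
  qed
qed

lemma rtranclp_adj_exits_graph_component:
  assumes "s \<in> A" "A \<subseteq> A'" "(adj A')\<^sup>*\<^sup>* s z" "z \<notin> graph_component A s"
  obtains a w where "a \<in> graph_component A s" "w \<in> A' - A" "adj A' a w"
proof -
  have "z \<in> graph_component A s \<or> (\<exists>a\<in>graph_component A s. \<exists>w\<in>A' - A. adj A' a w)"
    using assms(3)
  proof (induction rule: rtranclp_induct)
    case base
    then show ?case by (simp add: graph_component_def)
  next
    case (step y z)
    show ?case
    proof (cases "y \<in> graph_component A s \<and> z \<in> A")
      case True
      with step.hyps(2) graph_component_subset[OF assms(1)] have "adj A y z"
        by (auto simp: adj_def)
      with True show ?thesis using graph_component_closed by blast
    qed (use step in \<open>auto simp: adj_def\<close>)
  qed
  with assms(4) that show ?thesis by blast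
qed

lemma cube_eq: "cube T Y = {s. T \<subseteq> s \<and> s \<subseteq> T \<union> Y}"
  unfolding cube_def by (auto intro!: exI[of _ "s - T" for s])

lemma shatters_iff: "shatters C Y \<longleftrightarrow> (\<forall>W\<subseteq>Y. \<exists>c\<in>C. c \<inter> Y = W)"
proof -
  have "shatters C Y \<longleftrightarrow> (\<lambda>c. c \<inter> Y) ` C = Pow Y"
    unfolding shatters_def by (simp add: Setcompr_eq_image)
  also have "\<dots> \<longleftrightarrow> Pow Y \<subseteq> (\<lambda>c. c \<inter> Y) ` C"
    by blast
  finally show ?thesis by blast
qed

lemma shattersD: "shatters C Y \<Longrightarrow> W \<subseteq> Y \<Longrightarrow> \<exists>c\<in>C. c \<inter> Y = W"
  unfolding shatters_iff by simp

lemma shatters_mono: "shatters C Y \<Longrightarrow> C \<subseteq> C' \<Longrightarrow> shatters C' Y"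
  unfolding shatters_iff by (meson subsetD)

lemma notin_if_shatters_constant:
  assumes "shatters H Y" "\<forall>h\<in>H. (x \<in> h) = b"
  shows "x \<notin> Y"
proof
  assume "x \<in> Y"
  then obtain h h' where "h \<in> H" "h \<inter> Y = {x}" "h' \<in> H" "h' \<inter> Y = {}"
    using assms(1) unfolding shatters_iff by (metis empty_subsetI insert_subset)
  with assms(2) show False by blast
qed

lemma ampleD: "ample X C \<Longrightarrow> Y \<subseteq> X \<Longrightarrow> shatters C Y \<Longrightarrow> \<exists>T. T \<subseteq> X - Y \<and> cube T Y \<subseteq> C"
  unfolding ample_def by simp

lemma ample_flippable_cube:
  assumes amp: "ample X C" and "x \<in> X" "Y \<subseteq> X" "x \<notin> Y"
    and "shatters C (insert x Y)"
  shows "\<exists>T. T \<subseteq> X - Y \<and> cube T Y \<subseteq> {s\<in>C. (x \<in> s) = b \<and> flip x s \<in> C}"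
proof -
  obtain T where T: "T \<subseteq> X - insert x Y" "cube T (insert x Y) \<subseteq> C"
    using ampleD[OF amp _ assms(5)] assms(2,3) by blast
  define T' where "T' = (if b then insert x T else T)"
  have "T' \<subseteq> X - Y"
    using T(1) assms(2,4) by (auto simp: T'_def)
  moreover have "cube T' Y \<subseteq> {s\<in>C. (x \<in> s) = b \<and> flip x s \<in> C}"
  proof
    fix s assume "s \<in> cube T' Y"
    then have s: "T' \<subseteq> s" "s \<subseteq> T' \<union> Y" by (auto simp: cube_eq)
    have "x \<notin> T" using T(1) by blast
    then have "(x \<in> s) = b" "s \<in> cube T (insert x Y)" "flip x s \<in> cube T (insert x Y)"
      using s assms(4) by (auto simp: cube_eq T'_def mem_flip split: if_splits)
    then show "s \<in> {s\<in>C. (x \<in> s) = b \<and> flip x s \<in> C}" using T(2) by blast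
  qed
  ultimately show ?thesis by blast
qed

lemma ample_halfspace:
  assumes amp: "ample X C" and x: "x \<in> X"
  shows "ample X {s\<in>C. (x \<in> s) = b}"
  unfolding ample_def
proof (intro conjI allI impI)
  let ?H = "{s\<in>C. (x \<in> s) = b}"
  show "?H \<subseteq> Pow X" using amp by (auto simp: ample_def)
  fix Y assume Y: "Y \<subseteq> X \<and> shatters ?H Y"
  then have xY: "x \<notin> Y" by (intro notin_if_shatters_constant[of ?H Y x b]) auto
  show "\<exists>T. T \<subseteq> X - Y \<and> cube T Y \<subseteq> ?H"
  proof (cases "shatters C (insert x Y)")
    case True
    then show ?thesis using ample_flippable_cube[OF amp x _ xY, of b] Y by blast
  next
    case False
    txt \<open>Some pattern W on insert x Y is missed by C. Its restriction to Y is realized in ?H,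
      so W disagrees with b at x; hence a Y-cube of C cannot disagree with b at x.\<close>
    then obtain W where W: "W \<subseteq> insert x Y" "\<forall>c\<in>C. c \<inter> insert x Y \<noteq> W"
      by (auto simp: shatters_iff)
    have "W - {x} \<subseteq> Y" using W(1) by blast
    then obtain h where h: "h \<in> C" "(x \<in> h) = b" "h \<inter> Y = W - {x}"
      using shattersD[of ?H Y] Y by auto
    have xW: "(x \<in> W) \<noteq> b"
    proof
      assume "(x \<in> W) = b"
      with h W(1) have "h \<inter> insert x Y = W" by auto
      with h(1) W(2) show False by blast
    qed
    have "shatters C Y" using Y by (intro shatters_mono[of ?H Y C]) auto
    then obtain T where T: "T \<subseteq> X - Y" "cube T Y \<subseteq> C"
      using ampleD[OF amp conjunct1[OF Y]] by blast
    have "T \<union> (W \<inter> Y) \<in> C" using T(2) by (auto simp: cube_eq)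
    have "(x \<in> T) = b"
    proof (rule ccontr)
      assume "(x \<in> T) \<noteq> b"
      with xW have "x \<in> T \<longleftrightarrow> x \<in> W" by blast
      with T(1) W(1) have "(T \<union> (W \<inter> Y)) \<inter> insert x Y = W" by auto
      with \<open>T \<union> (W \<inter> Y) \<in> C\<close> W(2) show False by blast
    qed
    with T xY have "cube T Y \<subseteq> ?H" by (auto simp: cube_eq)
    with T(1) show ?thesis by blast
  qed
qed

lemma shatters_insert_if_shatters_flippable:
  assumes "shatters {s\<in>C. (x \<in> s) = b \<and> flip x s \<in> C} Y" "x \<notin> Y"
  shows "shatters C (insert x Y)"
  unfolding shatters_iff
proof (intro allI impI)
  fix W assume W: "W \<subseteq> insert x Y"
  then have "W - {x} \<subseteq> Y" by blast
  then obtain h where h: "h \<in> C" "(x \<in> h) = b" "flip x h \<in> C" "h \<inter> Y = W - {x}"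
    using shattersD[OF assms(1)] by blast
  show "\<exists>c\<in>C. c \<inter> insert x Y = W"
  proof (cases "(x \<in> W) = b")
    case True
    with h W have "h \<inter> insert x Y = W" by auto
    with h(1) show ?thesis by blast
  next
    case False
    with h W assms(2) have "flip x h \<inter> insert x Y = W" by (auto simp: mem_flip)
    with h(3) show ?thesis by blast
  qed
qed

lemma ample_flippable_half:
  assumes amp: "ample X C" and x: "x \<in> X"
  shows "ample X {s\<in>C. (x \<in> s) = b \<and> flip x s \<in> C}"
  unfolding ample_def
proof (intro conjI allI impI)
  let ?H = "{s\<in>C. (x \<in> s) = b \<and> flip x s \<in> C}"
  show "?H \<subseteq> Pow X" using amp by (auto simp: ample_def)
  fix Y assume Y: "Y \<subseteq> X \<and> shatters ?H Y"
  then have xY: "x \<notin> Y" by (intro notin_if_shatters_constant[of ?H Y x b]) auto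
  with Y have "shatters C (insert x Y)" by (intro shatters_insert_if_shatters_flippable) auto
  with ample_flippable_cube[OF amp x _ xY] Y show "\<exists>T. T \<subseteq> X - Y \<and> cube T Y \<subseteq> ?H" by blast
qed

lemma ample_fiber:
  assumes "finite F" "F \<subseteq> X" "ample X C"
  shows "ample X {s\<in>C. \<forall>y\<in>F. (y \<in> s) = (y \<in> c)}"
  using assms
proof (induction F rule: finite_induct)
  case (insert x F)
  have "{s\<in>C. \<forall>y\<in>insert x F. (y \<in> s) = (y \<in> c)}
      = {s\<in>{s\<in>C. \<forall>y\<in>F. (y \<in> s) = (y \<in> c)}. (x \<in> s) = (x \<in> c)}"
    by auto
  moreover have "ample X \<dots>" using insert by (intro ample_halfspace) auto
  ultimately show ?case by (simp only:)
qed simp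

lemma ample_Int_B:
  assumes "finite X" "ample X C" "c \<subseteq> X" "t \<subseteq> X"
  shows "ample X (C \<inter> B c t)"
proof -
  have "C \<inter> B c t = {s\<in>C. \<forall>y\<in>X - sym_diff c t. (y \<in> s) = (y \<in> c)}"
  proof (intro set_eqI iffI)
    fix s assume s: "s \<in> {s\<in>C. \<forall>y\<in>X - sym_diff c t. (y \<in> s) = (y \<in> c)}"
    then have "s \<subseteq> X" using assms(2) by (auto simp: ample_def)
    with s assms(3,4) show "s \<in> C \<inter> B c t" by (auto simp: B_def)
  qed (auto simp: B_def)
  with ample_fiber[of "X - sym_diff c t" X C c] assms(1,2) show ?thesis by simp
qed

lemma ample_Int_B_connected:
  assumes fin: "finite X" and amp: "ample X C" and "c \<in> C" "t \<in> C"
  shows "(adj (C \<inter> B c t))\<^sup>*\<^sup>* c t"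
  using assms(3,4)
proof (induction "card (sym_diff c t)" arbitrary: c t rule: less_induct)
  case less
  let ?Q = "C \<inter> B c t"
  have "c \<subseteq> X" "t \<subseteq> X" using amp less.prems by (auto simp: ample_def)
  then have fin_ct: "finite (sym_diff c t)" by (auto intro: finite_subset[OF _ fin])
  consider (between) u where "u \<in> ?Q" "u \<noteq> c" "u \<noteq> t" | (ends) "?Q \<subseteq> {c, t}"
    by blast
  then show ?case
  proof cases
    case between
    have "card (sym_diff c u) < card (sym_diff c t)"
      using between fin_ct by (intro card_sym_diff_less_if_in_B) auto
    then have "(adj (C \<inter> B c u))\<^sup>*\<^sup>* c u" using less between by blast
    moreover have "C \<inter> B c u \<subseteq> ?Q" using between B_subset_B by blast
    ultimately have cu: "(adj ?Q)\<^sup>*\<^sup>* c u" using rtranclp_adj_mono by blast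
    have "u \<in> B t c" using between B_commute by blast
    then have "card (sym_diff t u) < card (sym_diff t c)"
      using between fin_ct by (intro card_sym_diff_less_if_in_B) (auto simp: Un_commute)
    then have "card (sym_diff u t) < card (sym_diff c t)" by (simp add: Un_commute)
    then have "(adj (C \<inter> B u t))\<^sup>*\<^sup>* u t" using less between by blast
    moreover have "C \<inter> B u t \<subseteq> ?Q"
      using B_subset_B[OF \<open>u \<in> B t c\<close>] B_commute by blast
    ultimately have ut: "(adj ?Q)\<^sup>*\<^sup>* u t" using rtranclp_adj_mono by blast
    from cu ut show ?thesis by (rule rtranclp_trans)
  next
    case ends
    show ?thesis
    proof (cases "c = t")
      case False
      then obtain e where e: "e \<in> sym_diff c t" by blast
      have sh: "shatters ?Q {e}"
        unfolding shatters_iff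
      proof (intro allI impI)
        fix W assume "W \<subseteq> {e}"
        then have W: "W = {} \<or> W = {e}" by blast
        have "c \<in> ?Q" "t \<in> ?Q" using less.prems by (auto simp: B_def)
        moreover have "c \<inter> {e} = {e} \<and> t \<inter> {e} = {} \<or> c \<inter> {e} = {} \<and> t \<inter> {e} = {e}"
          using e by auto
        ultimately show "\<exists>q\<in>?Q. q \<inter> {e} = W" using W by metis
      qed
      have "ample X ?Q" using fin amp \<open>c \<subseteq> X\<close> \<open>t \<subseteq> X\<close> by (rule ample_Int_B)
      moreover have "{e} \<subseteq> X" using e \<open>c \<subseteq> X\<close> \<open>t \<subseteq> X\<close> by auto
      ultimately obtain T where T: "T \<subseteq> X - {e}" "cube T {e} \<subseteq> ?Q"
        using ampleD sh by meson
      have "T \<in> cube T {e}" "insert e T \<in> cube T {e}" by (auto simp: cube_eq)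
      with T ends have "T \<in> {c, t}" "insert e T \<in> {c, t}" "e \<notin> T" by blast+
      then have "t = flip e c" using False by (auto simp: flip_def)
      moreover have "c \<in> ?Q" "t \<in> ?Q" using less.prems by (auto simp: B_def)
      ultimately have "adj ?Q c t" by (auto simp: adj_iff_flip)
      then show ?thesis by blast
    qed simp
  qed
qed

lemma locally_convex_in_halfspace:
  "locally_convex_in C' C \<Longrightarrow> locally_convex_in {p\<in>C'. (e \<in> p) = b} C"
  unfolding locally_convex_in_def B_def by auto

lemma locally_convex_in_graph_component:
  assumes lc: "locally_convex_in A C" and "s \<in> A"
  shows "locally_convex_in (graph_component A s) C"
  unfolding locally_convex_in_def
proof (intro ballI impI subsetI)
  let ?K = "graph_component A s"
  fix z z' x
  assume z: "z \<in> ?K" "z' \<in> ?K" "card (sym_diff z z') = 2" and x: "x \<in> B z z' \<inter> C"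
  have "z \<in> A" "z' \<in> A" using z graph_component_subset[OF assms(2)] by auto
  with lc z(3) x have "x \<in> A" by (auto simp: locally_convex_in_def)
  show "x \<in> ?K"
  proof (cases "x = z \<or> x = z'")
    case False
    with z(3) x have "card (sym_diff z x) = 1" by (intro card_sym_diff_eq_1_if_in_B_card_2) auto
    with \<open>z \<in> A\<close> \<open>x \<in> A\<close> have "adj A z x" by (simp add: adj_def)
    with z(1) show ?thesis by (rule graph_component_closed)
  qed (use z in auto)
qed

lemma flip_mem_along_path:
  assumes lc: "locally_convex_in C' C"
    and P: "P \<subseteq> C'" "\<And>q. q \<in> P \<Longrightarrow> (e \<in> q) = b \<and> flip e q \<in> C"
    and "(adj P)\<^sup>*\<^sup>* p a" "flip e a \<in> C'"
  shows "flip e p \<in> C'"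
  using assms(4)
proof (induction rule: converse_rtranclp_induct)
  case (step p q)
  then obtain f where pq: "p \<in> P" "q \<in> P" "q = flip f p" by (auto simp: adj_iff_flip)
  have "(e \<in> p) = b" "(e \<in> q) = b" using P(2) pq(1,2) by auto
  with pq(3) have "f \<noteq> e" by (auto simp: mem_flip)
  with pq(3) have "card (sym_diff p (flip e q)) = 2" "flip e p \<in> B p (flip e q)"
    using card_sym_diff_flip_flip flip_in_B_flip_flip by auto
  moreover have "p \<in> C'" "flip e p \<in> C" using pq(1) P by auto
  ultimately show "flip e p \<in> C'" using lc step.IH unfolding locally_convex_in_def by blast
qed (fact assms(5))

lemma flip_mem_if_proper_subclasses_convex:
  assumes fin: "finite X" and amp: "ample X C" and sub: "C' \<subseteq> C"
    and conn: "graph_connected C'" and lc: "locally_convex_in C' C"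
    and smaller: "\<And>K. K \<subset> C' \<Longrightarrow> graph_connected K \<Longrightarrow> locally_convex_in K C \<Longrightarrow> convex_in K C"
    and s: "s \<in> C'" "flip e s \<in> C" and y: "y \<in> C'" "(e \<in> y) \<noteq> (e \<in> s)"
  shows "flip e s \<in> C'"
proof -
  define S where "S = {p\<in>C'. (e \<in> p) = (e \<in> s)}"
  define K where "K = graph_component S s"
  have sS: "s \<in> S" using s(1) by (simp add: S_def)
  then have KS: "K \<subseteq> S" unfolding K_def by (rule graph_component_subset)
  have sK: "s \<in> K" by (simp add: K_def graph_component_def)
  have yK: "y \<notin> K" using y KS by (auto simp: S_def)
  have "S \<subseteq> C'" by (auto simp: S_def)
  moreover have "(adj C')\<^sup>*\<^sup>* s y" using conn s(1) y(1) by (simp add: graph_connected_def)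
  ultimately obtain a w where a: "a \<in> K" and w: "w \<in> C' - S" "adj C' a w"
    using rtranclp_adj_exits_graph_component[OF sS] yK unfolding K_def by metis
  then obtain f where "w = flip f a" by (auto simp: adj_iff_flip)
  moreover have "(e \<in> a) = (e \<in> s)" "(e \<in> w) \<noteq> (e \<in> s)" using a KS w by (auto simp: S_def)
  ultimately have wa: "w = flip e a" by (auto simp: mem_flip split: if_splits)
  have "convex_in K C"
  proof (rule smaller)
    show "K \<subset> C'" using KS yK y(1) by (auto simp: S_def)
    show "graph_connected K" unfolding K_def by (rule graph_connected_graph_component)
    show "locally_convex_in K C"
      unfolding K_def using sS lc
      by (intro locally_convex_in_graph_component) (auto simp: S_def intro: locally_convex_in_halfspace)
  qed
  define R where "R = {p\<in>C. (e \<in> p) = (e \<in> s) \<and> flip e p \<in> C}"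
  have "s \<subseteq> X" "flip e s \<subseteq> X" using amp s sub by (auto simp: ample_def)
  then have "e \<in> X" by (cases "e \<in> s") (auto simp: flip_def)
  with amp have "ample X R" unfolding R_def by (rule ample_flippable_half)
  moreover have "s \<in> R" "a \<in> R" using s sub a KS w wa by (auto simp: R_def S_def)
  ultimately have path: "(adj (R \<inter> B s a))\<^sup>*\<^sup>* s a" using fin ample_Int_B_connected by blast
  have "R \<inter> B s a \<subseteq> K" using \<open>convex_in K C\<close> sK a by (auto simp: convex_in_def R_def)
  with KS have "R \<inter> B s a \<subseteq> C'" by (auto simp: S_def)
  moreover have "flip e a \<in> C'" using w wa by blast
  ultimately show "flip e s \<in> C'"
    using flip_mem_along_path[OF lc, where P = "R \<inter> B s a" and b = "e \<in> s"] path
    by (auto simp: R_def)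
qed

lemma convex_in_if_locally_convex_in:
  assumes fin: "finite X" and amp: "ample X C"
    and "C' \<subseteq> C" "graph_connected C'" "locally_convex_in C' C"
  shows "convex_in C' C"
proof -
  have "finite C'" using assms(3) amp fin by (auto simp: ample_def intro: finite_subset)
  then show ?thesis using assms(3-5)
  proof (induction C' rule: finite_psubset_induct)
    case (psubset C')
    show ?case
      unfolding convex_in_def
    proof (intro ballI subsetI)
      fix c d t assume cd: "c \<in> C'" "d \<in> C'" and t: "t \<in> B c d \<inter> C"
      have "z \<in> C'" if "(adj (C \<inter> B c t))\<^sup>*\<^sup>* c z" for z
        using that
      proof (induction rule: rtranclp_induct)
        case (step y z)
        then obtain f where y: "y \<in> C" and z: "z \<in> C \<inter> B c t" "z = flip f y"
          by (auto simp: adj_iff_flip)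
        have "B c t \<subseteq> B c d" using t by (intro B_subset_B) simp
        with z have "flip f y \<in> B c d" by auto
        then obtain w where "w \<in> C'" "(f \<in> w) \<noteq> (f \<in> y)"
          using flip_in_B_separates cd by fastforce
        have "flip f y \<in> C'"
        proof (rule flip_mem_if_proper_subclasses_convex[OF fin amp psubset.prems])
          show "convex_in K C" if "K \<subset> C'" "graph_connected K" "locally_convex_in K C" for K
            using psubset.IH psubset.prems(1) that by (meson psubset_imp_subset subset_trans)
        qed (use step.IH z \<open>w \<in> C'\<close> \<open>(f \<in> w) \<noteq> (f \<in> y)\<close> in auto)
        with z show ?case by simp
      qed (fact cd(1))
      with ample_Int_B_connected[OF fin amp] cd(1) t psubset.prems(1) show "t \<in> C'" by blast
    qed
  qed
qed

theorem lemma4p8: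
  fixes X :: "'a set" and C C' :: "'a set set"
  assumes "finite X"
    and "ample X C"
    and "C' \<subseteq> C"
    and "graph_connected C'"
  shows "convex_in C' C \<longleftrightarrow> locally_convex_in C' C"
proof
  show "convex_in C' C \<Longrightarrow> locally_convex_in C' C"
    unfolding convex_in_def locally_convex_in_def by blast
  show "locally_convex_in C' C \<Longrightarrow> convex_in C' C"
    using convex_in_if_locally_convex_in assms by blast
qed

end
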